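(* Let $R$ be a $*$-ring. Then the following are equivalent: (1) $R$ is strongly $J$-$*$-clean. (2) $R$ is uniquely clean and $R$ is strongly $*$-clean. (3) $R$ is uniquely strongly $*$-clean. (4) $R$ is uniquely $J$-$*$-clean. (5) For any $a\in R$, there exists a unique idempotent $e\in R$ such that $a-e\in U(R)$, $ae=ea$, $ae^*=e^*a$ and $e-e^*\in J(R)$.
   Context: All rings are associative with identity. A $*$-ring is a ring $R$ with an involution $*$, i.e. a map $a\mapsto a^*$ with $(a+b)^*=a^*+b^*$, $(ab)^*=b^*a^*$, $(a^* )^*=a$. $U(R)$ denotes the group of units and $J(R)$ the Jacobson radical of $R$. A projection is an element $e$ with $e^2=e=e^*$. $R$ is strongly $J$-$*$-clean if every $a\in R$ can be written $a=e+u$ with $e$ a projection, $u\in J(R)$ and $ae=ea$. $R$ is strongly $*$-clean if every $a\in R$ can be written $a=e+u$ with $e$ a projection, $u\in U(R)$ and $eu=ue$. $R$ is uniquely clean if every element of $R$ can be written uniquely as the sum of an idempotent and a unit. $R$ is uniquely strongly $*$-clean if for every $a\in R$ there exists a unique projection $e\in R$ such that $a-e\in U(R)$ and $ae=ea$. $R$ is uniquely $J$-$*$-clean if for every $a\in R$ there exists a unique projection $e\in R$ such that $a-e\in J(R)$. *)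

theory Defs
  imports Main
begin

definition star_ring :: "('a::ring_1 \<Rightarrow> 'a) \<Rightarrow> bool" where
  "star_ring st \<longleftrightarrow>
     (\<forall>a b. st (a + b) = st a + st b) \<and>
     (\<forall>a b. st (a * b) = st b * st a) \<and>
     (\<forall>a. st (st a) = a)"

definition units_of_ring :: "'a::ring_1 set" where
  "units_of_ring = {u. \<exists>v. u * v = 1 \<and> v * u = 1}"

definition left_ideal :: "'a::ring_1 set \<Rightarrow> bool" where
  "left_ideal I \<longleftrightarrow> 0 \<in> I \<and> (\<forall>x\<in>I. \<forall>y\<in>I. x + y \<in> I) \<and> (\<forall>x\<in>I. - x \<in> I)
     \<and> (\<forall>r. \<forall>x\<in>I. r * x \<in> I)"

definition maximal_left_ideal :: "'a::ring_1 set \<Rightarrow> bool" where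
  "maximal_left_ideal I \<longleftrightarrow> left_ideal I \<and> I \<noteq> UNIV \<and>
     (\<forall>L. left_ideal L \<and> I \<subseteq> L \<longrightarrow> L = I \<or> L = UNIV)"

definition jacobson :: "'a::ring_1 set" where
  "jacobson = \<Inter> {I. maximal_left_ideal I}"

definition idempotent :: "'a::ring_1 \<Rightarrow> bool" where
  "idempotent e \<longleftrightarrow> e * e = e"

definition projection :: "('a::ring_1 \<Rightarrow> 'a) \<Rightarrow> 'a \<Rightarrow> bool" where
  "projection st e \<longleftrightarrow> e * e = e \<and> st e = e"

definition strongly_J_star_clean :: "('a::ring_1 \<Rightarrow> 'a) \<Rightarrow> bool" where
  "strongly_J_star_clean st \<longleftrightarrow>
     (\<forall>a. \<exists>e u. a = e + u \<and> projection st e \<and> u \<in> jacobson \<and> a * e = e * a)"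

definition strongly_star_clean :: "('a::ring_1 \<Rightarrow> 'a) \<Rightarrow> bool" where
  "strongly_star_clean st \<longleftrightarrow>
     (\<forall>a. \<exists>e u. a = e + u \<and> projection st e \<and> u \<in> units_of_ring \<and> e * u = u * e)"

definition uniquely_clean :: "'a::ring_1 itself \<Rightarrow> bool" where
  "uniquely_clean _ \<longleftrightarrow>
     (\<forall>a::'a. \<exists>!(e, u). a = e + u \<and> idempotent e \<and> u \<in> units_of_ring)"

definition uniquely_strongly_star_clean :: "('a::ring_1 \<Rightarrow> 'a) \<Rightarrow> bool" where
  "uniquely_strongly_star_clean st \<longleftrightarrow>
     (\<forall>a. \<exists>!e. projection st e \<and> a - e \<in> units_of_ring \<and> a * e = e * a)"

definition uniquely_J_star_clean :: "('a::ring_1 \<Rightarrow> 'a) \<Rightarrow> bool" where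
  "uniquely_J_star_clean st \<longleftrightarrow>
     (\<forall>a. \<exists>!e. projection st e \<and> a - e \<in> jacobson)"

end

theory Submission
  imports Defs
begin

text \<open>
  If \<open>R\<close> is strongly J-*-clean, every idempotent \<open>g = e + u\<close> differs from a commuting
  projection by an element of \<open>J(R)\<close>; as \<open>(g - e)\<^sup>3 = g - e\<close> and \<open>J(R)\<close> has no nonzero
  tripotents, \<open>g = e\<close>. So all idempotents are projections, which in a *-ring makes them
  central, and units are \<open>1\<close> modulo \<open>J(R)\<close>; this yields uniqueness of clean decompositions.
  Conversely, conditions (2), (3) and (5) each force idempotents to be projections, and in a
  uniquely clean ring with central idempotents every unit is \<open>1\<close> modulo \<open>J(R)\<close>, so that
  \<open>a = e + v\<close> gives \<open>a \<equiv> 1 - e\<close>. For (4), \<open>R/J(R)\<close> is Boolean, so \<open>s = e r (1 - e)\<close> lies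
  in \<open>J(R)\<close> for a projection \<open>e\<close>; conjugating \<open>e\<close> by \<open>1 + s - s\<^sup>*\<close> gives another projection
  congruent to \<open>e\<close>, and uniqueness forces \<open>s = 0\<close>, i.e. \<open>e\<close> is central.
\<close>

lemma units_of_ringI: "(u::'a::ring_1) * v = 1 \<Longrightarrow> v * u = 1 \<Longrightarrow> u \<in> units_of_ring"
  unfolding units_of_ring_def by blast

lemma units_of_ringE:
  assumes "(u::'a::ring_1) \<in> units_of_ring"
  obtains v where "u * v = 1" "v * u = 1"
  using assms unfolding units_of_ring_def by blast

lemma units_of_ring_mult:
  assumes "(u::'a::ring_1) \<in> units_of_ring" "w \<in> units_of_ring"
  shows "u * w \<in> units_of_ring"
proof -
  obtain u' w' where "u * u' = 1" "u' * u = 1" "w * w' = 1" "w' * w = 1"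
    using assms by (metis units_of_ringE)
  then have "(u * w) * (w' * u') = 1" "(w' * u') * (u * w) = 1"
    by (metis mult.assoc mult_1_left)+
  then show ?thesis by (rule units_of_ringI)
qed

lemma units_of_ring_uminus: "(u::'a::ring_1) \<in> units_of_ring \<Longrightarrow> - u \<in> units_of_ring"
  by (metis units_of_ringE units_of_ringI minus_mult_minus)

lemma idempotent_unit_eq_one: "(e::'a::ring_1) * e = e \<Longrightarrow> e \<in> units_of_ring \<Longrightarrow> e = 1"
  by (metis units_of_ringE mult.assoc mult_1_right)

lemma reflection_in_units_of_ring:
  assumes "(e::'a::ring_1) * e = e"
  shows "e + e - 1 \<in> units_of_ring"
proof -
  have "(e + e - 1) * (e + e - 1) = 1" using assms by (simp add: algebra_simps)
  then show ?thesis by (metis units_of_ringI)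
qed

section \<open>The Jacobson radical\<close>

lemma left_ideal_add: "left_ideal I \<Longrightarrow> x \<in> I \<Longrightarrow> y \<in> I \<Longrightarrow> x + y \<in> I"
  unfolding left_ideal_def by blast

lemma left_ideal_mult_left: "left_ideal I \<Longrightarrow> x \<in> I \<Longrightarrow> r * x \<in> I"
  unfolding left_ideal_def by blast

lemma left_ideal_eq_UNIV: "left_ideal I \<Longrightarrow> (1::'a::ring_1) \<in> I \<Longrightarrow> I = UNIV"
  unfolding left_ideal_def by (metis UNIV_eq_I mult_1_right)

lemma left_ideal_zero: "left_ideal {0::'a::ring_1}"
  unfolding left_ideal_def by simp

lemma left_ideal_add_left_multiples:
  assumes "left_ideal (M::'a::ring_1 set)"
  shows "left_ideal {m + r * x | m r. m \<in> M}"
  unfolding left_ideal_def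
proof (intro conjI ballI allI)
  have "0 = 0 + 0 * x" "0 \<in> M" using assms unfolding left_ideal_def by simp_all
  then show "0 \<in> {m + r * x | m r. m \<in> M}" by blast
next
  fix a b assume "a \<in> {m + r * x | m r. m \<in> M}" "b \<in> {m + r * x | m r. m \<in> M}"
  then obtain m1 r1 m2 r2 where "a = m1 + r1 * x" "b = m2 + r2 * x" "m1 \<in> M" "m2 \<in> M" by blast
  moreover have "m1 + m2 \<in> M" using assms \<open>m1 \<in> M\<close> \<open>m2 \<in> M\<close> unfolding left_ideal_def by blast
  moreover have "a + b = (m1 + m2) + (r1 + r2) * x"
    using \<open>a = _\<close> \<open>b = _\<close> by (simp add: algebra_simps)
  ultimately show "a + b \<in> {m + r * x | m r. m \<in> M}" by blast
next
  fix a assume "a \<in> {m + r * x | m r. m \<in> M}"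
  then obtain m1 r1 where "a = m1 + r1 * x" "m1 \<in> M" by blast
  moreover have "- m1 \<in> M" using assms \<open>m1 \<in> M\<close> unfolding left_ideal_def by blast
  moreover have "- a = (- m1) + (- r1) * x" using \<open>a = _\<close> by simp
  ultimately show "- a \<in> {m + r * x | m r. m \<in> M}" by blast
next
  fix s a assume "a \<in> {m + r * x | m r. m \<in> M}"
  then obtain m1 r1 where "a = m1 + r1 * x" "m1 \<in> M" by blast
  moreover have "s * m1 \<in> M" using assms \<open>m1 \<in> M\<close> unfolding left_ideal_def by blast
  moreover have "s * a = (s * m1) + (s * r1) * x"
    using \<open>a = _\<close> by (simp add: algebra_simps mult.assoc)
  ultimately show "s * a \<in> {m + r * x | m r. m \<in> M}" by blast
qed

lemma left_ideal_Union_chain: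
  assumes "\<C> \<noteq> {}" and ideals: "\<forall>I\<in>\<C>. left_ideal I"
    and chain: "\<forall>I\<in>\<C>. \<forall>J\<in>\<C>. I \<subseteq> J \<or> J \<subseteq> I"
  shows "left_ideal (\<Union>\<C> :: 'a::ring_1 set)"
  unfolding left_ideal_def
proof (intro conjI ballI allI)
  show "0 \<in> \<Union>\<C>" using assms(1) ideals unfolding left_ideal_def by blast
next
  fix x y assume "x \<in> \<Union>\<C>" "y \<in> \<Union>\<C>"
  then obtain I where "I \<in> \<C>" "x \<in> I" "y \<in> I" using chain by blast
  then show "x + y \<in> \<Union>\<C>" using ideals left_ideal_add by blast
next
  fix x assume "x \<in> \<Union>\<C>"
  then obtain I where "I \<in> \<C>" "x \<in> I" by blast
  then show "- x \<in> \<Union>\<C>" using ideals unfolding left_ideal_def by blast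
next
  fix r x assume "x \<in> \<Union>\<C>"
  then obtain I where "I \<in> \<C>" "x \<in> I" by blast
  then show "r * x \<in> \<Union>\<C>" using ideals left_ideal_mult_left by blast
qed

lemma exists_maximal_left_ideal:
  assumes "left_ideal (I::'a::ring_1 set)" and "1 \<notin> I"
  shows "\<exists>M. maximal_left_ideal M \<and> I \<subseteq> M"
proof -
  define \<A> where "\<A> = {L. left_ideal L \<and> I \<subseteq> L \<and> (1::'a) \<notin> L}"
  have "\<exists>M\<in>\<A>. \<forall>X\<in>\<A>. M \<subseteq> X \<longrightarrow> X = M"
  proof (rule subset_Zorn_nonempty)
    show "\<A> \<noteq> {}" using assms unfolding \<A>_def by blast
    show "\<Union>\<C> \<in> \<A>" if "\<C> \<noteq> {}" and "subset.chain \<A> \<C>" for \<C>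
      using that left_ideal_Union_chain[of \<C>] unfolding \<A>_def subset_chain_def by blast
  qed
  then obtain M where M: "M \<in> \<A>" and max: "\<forall>X\<in>\<A>. M \<subseteq> X \<longrightarrow> X = M" by blast
  have "L = M \<or> L = UNIV" if "left_ideal L" "M \<subseteq> L" for L
  proof (cases "1 \<in> L")
    case True
    then show ?thesis using that(1) left_ideal_eq_UNIV by blast
  next
    case False
    then have "L \<in> \<A>" using that M unfolding \<A>_def by blast
    then show ?thesis using max that(2) by blast
  qed
  then have "maximal_left_ideal M" using M unfolding maximal_left_ideal_def \<A>_def by blast
  then show ?thesis using M unfolding \<A>_def by blast
qed

lemma jacobson_left_ideal: "left_ideal (jacobson :: 'a::ring_1 set)"
  unfolding left_ideal_def jacobson_def maximal_left_ideal_def by auto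

lemma zero_in_jacobson: "0 \<in> jacobson"
  using jacobson_left_ideal unfolding left_ideal_def by blast

lemma jacobson_add: "x \<in> jacobson \<Longrightarrow> y \<in> jacobson \<Longrightarrow> x + y \<in> jacobson"
  using jacobson_left_ideal unfolding left_ideal_def by blast

lemma jacobson_uminus_iff [simp]: "- x \<in> jacobson \<longleftrightarrow> x \<in> jacobson"
  using jacobson_left_ideal unfolding left_ideal_def by (auto dest: bspec[of _ _ "- x"])

lemma jacobson_diff: "x \<in> jacobson \<Longrightarrow> y \<in> jacobson \<Longrightarrow> x - y \<in> jacobson"
  by (metis diff_conv_add_uminus jacobson_add jacobson_uminus_iff)

lemma jacobson_mult_left: "x \<in> jacobson \<Longrightarrow> r * x \<in> jacobson"
  using jacobson_left_ideal unfolding left_ideal_def by blast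

lemma one_minus_jacobson_left_invertible:
  assumes "(x::'a::ring_1) \<in> jacobson"
  shows "\<exists>t. t * (1 - x) = 1"
proof (rule ccontr)
  assume no_inverse: "\<nexists>t. t * (1 - x) = 1"
  define L where "L = {m + r * (1 - x) | m r. m \<in> {0::'a}}"
  have "left_ideal L" unfolding L_def by (rule left_ideal_add_left_multiples[OF left_ideal_zero])
  moreover have "1 \<notin> L" using no_inverse unfolding L_def by auto
  ultimately obtain M where M: "maximal_left_ideal M" "L \<subseteq> M"
    using exists_maximal_left_ideal by blast
  have "1 - x \<in> M" using M(2) unfolding L_def by (force intro: exI[of _ 1])
  moreover have "x \<in> M" using assms M(1) unfolding jacobson_def by blast
  ultimately have "(1 - x) + x \<in> M"
    using M(1) left_ideal_add unfolding maximal_left_ideal_def by blast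
  then have "1 \<in> M" by simp
  then show False using M(1) left_ideal_eq_UNIV unfolding maximal_left_ideal_def by blast
qed

lemma jacobson_iff: "(x::'a::ring_1) \<in> jacobson \<longleftrightarrow> (\<forall>r. \<exists>t. t * (1 - r * x) = 1)"
proof (intro iffI allI)
  fix r assume "x \<in> jacobson"
  then show "\<exists>t. t * (1 - r * x) = 1"
    by (intro one_minus_jacobson_left_invertible jacobson_mult_left)
next
  assume inv: "\<forall>r. \<exists>t. t * (1 - r * x) = 1"
  show "x \<in> jacobson"
    unfolding jacobson_def
  proof
    fix M :: "'a set" assume "M \<in> {I. maximal_left_ideal I}"
    then have M: "left_ideal M" "M \<noteq> UNIV"
      and max: "\<And>L. left_ideal L \<Longrightarrow> M \<subseteq> L \<Longrightarrow> L = M \<or> L = UNIV"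
      unfolding maximal_left_ideal_def by auto
    show "x \<in> M"
    proof (rule ccontr)
      assume "x \<notin> M"
      define L where "L = {m + r * x | m r. m \<in> M}"
      have "left_ideal L" unfolding L_def using M(1) by (rule left_ideal_add_left_multiples)
      moreover have "M \<subseteq> L" unfolding L_def by (force intro: exI[of _ 0])
      moreover have "x \<in> L"
        using M(1) unfolding L_def left_ideal_def by (force intro: exI[of _ 0] exI[of _ 1])
      ultimately have "L = UNIV" using max \<open>x \<notin> M\<close> by blast
      then obtain m r where "1 = m + r * x" "m \<in> M" unfolding L_def by blast
      then have m: "m \<in> M" "m = 1 - r * x" by (simp_all add: eq_diff_eq)
      obtain t where "t * (1 - r * x) = 1" using inv by blast
      then have "t * m = 1" using m(2) by simp
      moreover have "t * m \<in> M" using M(1) m(1) by (rule left_ideal_mult_left)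
      ultimately have "1 \<in> M" by simp
      then show False using M left_ideal_eq_UNIV by blast
    qed
  qed
qed

lemma one_minus_jacobson_in_units:
  assumes x: "(x::'a::ring_1) \<in> jacobson"
  shows "1 - x \<in> units_of_ring"
proof -
  obtain t where t: "t * (1 - x) = 1" using one_minus_jacobson_left_invertible[OF x] by blast
  then have "t = 1 - (- (t * x))" by (simp add: algebra_simps)
  moreover have "- (t * x) \<in> jacobson" using x by (simp add: jacobson_mult_left)
  ultimately obtain t' where t': "t' * t = 1" using one_minus_jacobson_left_invertible by metis
  have "t' = 1 - x" by (metis t t' mult.assoc mult_1_left mult_1_right)
  then show ?thesis using t t' by (metis units_of_ringI)
qed

lemma jacobson_mult_right:
  assumes x: "(x::'a::ring_1) \<in> jacobson"
  shows "x * t \<in> jacobson"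
  unfolding jacobson_iff
proof
  fix r
  obtain c where c: "c * (1 - t * r * x) = 1"
    using x jacobson_mult_left one_minus_jacobson_left_invertible by blast
  \<comment> \<open>Jacobson's lemma: a left inverse of \<open>1 - t r x\<close> yields one of \<open>1 - r x t\<close>.\<close>
  have "(1 + r * x * c * t) * (1 - r * (x * t)) = 1 - r * x * t + r * x * (c * (1 - t * r * x)) * t"
    by (simp add: algebra_simps mult.assoc)
  also have "\<dots> = 1" using c by simp
  finally show "\<exists>s. s * (1 - r * (x * t)) = 1" by blast
qed

lemma units_add_jacobson:
  assumes u: "(u::'a::ring_1) \<in> units_of_ring" and j: "j \<in> jacobson"
  shows "u + j \<in> units_of_ring"
proof -
  obtain v where v: "u * v = 1" "v * u = 1" using u by (rule units_of_ringE)
  have "1 - (- (v * j)) \<in> units_of_ring"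
    using j by (simp add: jacobson_mult_left one_minus_jacobson_in_units del: diff_minus_eq_add)
  then have "u * (1 - (- (v * j))) \<in> units_of_ring" using u units_of_ring_mult by blast
  moreover have "u * (1 - (- (v * j))) = u + j" using v by (simp add: algebra_simps mult.assoc[symmetric])
  ultimately show ?thesis by simp
qed

lemma jacobson_tripotent_eq_zero:
  assumes x: "(x::'a::ring_1) \<in> jacobson" and "x * x * x = x"
  shows "x = 0"
proof -
  obtain v where v: "(1 - x * x) * v = 1"
    using x jacobson_mult_left one_minus_jacobson_in_units units_of_ringE by metis
  have "x * (1 - x * x) = 0" using assms(2) by (simp add: algebra_simps mult.assoc)
  then show ?thesis by (metis v mult.assoc mult_1_right mult_zero_left)
qed

section \<open>Idempotents and clean decompositions\<close>

lemma commuting_idempotents_diff_cube: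
  assumes e: "(e::'a::ring_1) * e = e" and f: "f * f = f" and c: "e * f = f * e"
  shows "(e - f) * (e - f) * (e - f) = e - f"
proof -
  have e2: "e * (e * x) = e * x" for x by (metis e mult.assoc)
  have f2: "f * (f * x) = f * x" for x by (metis f mult.assoc)
  have c2: "f * (e * x) = e * (f * x)" for x by (metis c mult.assoc)
  have "(e - f) * (e - f) = e + f - e * f - e * f" by (simp add: algebra_simps e f c)
  moreover have "(e + f - e * f - e * f) * (e - f) = e - f"
    by (simp add: algebra_simps e f c mult.assoc e2 f2 c2)
  ultimately show ?thesis by simp
qed

lemma commuting_idempotents_eq_if_diff_in_jacobson:
  assumes "(e::'a::ring_1) * e = e" "f * f = f" "e * f = f * e" "e - f \<in> jacobson"
  shows "e = f"
  using jacobson_tripotent_eq_zero[OF assms(4) commuting_idempotents_diff_cube[OF assms(1-3)]]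
  by simp

lemma commuting_idempotents_diff_in_units:
  assumes e: "(e::'a::ring_1) * e = e" and f: "f * f = f" and c: "e * f = f * e"
    and u: "e - f \<in> units_of_ring"
  shows "f = 1 - e"
proof -
  obtain d where d: "d * (e - f) = 1" using u units_of_ringE by metis
  have "(e - f) * ((e - f) * (e - f) - 1) = 0"
    using commuting_idempotents_diff_cube[OF e f c]
    by (simp add: right_diff_distrib mult.assoc[symmetric])
  then have "(e - f) * (e - f) = 1" by (metis d mult.assoc mult_1_left mult_zero_right right_minus_eq)
  then have sq: "e + f - e * f - e * f = 1" by (simp add: algebra_simps e f c)
  then have "e * (e + f - e * f - e * f) = e" by simp
  then have "e * f = 0" by (simp add: algebra_simps e mult.assoc[symmetric])
  then show ?thesis using sq by (simp add: algebra_simps)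
qed

lemma idempotent_central_if_corners_zero:
  fixes e r :: "'a::ring_1"
  assumes "e * r * (1 - e) = 0" and "(1 - e) * r * e = 0"
  shows "e * r = r * e"
proof -
  have "e * r = e * r * e" using assms(1) by (simp add: right_diff_distrib)
  also have "\<dots> = r * e" using assms(2) by (simp add: left_diff_distrib)
  finally show ?thesis .
qed

lemma dedekind_finite_if_idempotents_central:
  fixes a b :: "'a::ring_1"
  assumes central: "\<And>e r :: 'a. e * e = e \<Longrightarrow> e * r = r * e" and "b * a = 1"
  shows "a * b = 1"
proof -
  have ab: "(a * b) * (a * b) = a * b" by (metis assms(2) mult.assoc mult_1_right)
  have "1 = b * (a * b * a)" using assms(2) by (metis mult.assoc mult_1_right)
  also have "\<dots> = b * (a * (a * b))" using central[OF ab] by simp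
  also have "\<dots> = a * b" using assms(2) by (simp add: mult.assoc[symmetric])
  finally show ?thesis by simp
qed

lemma uniquely_clean_iff:
  "uniquely_clean TYPE('a::ring_1) \<longleftrightarrow> (\<forall>a::'a. \<exists>!e. idempotent e \<and> a - e \<in> units_of_ring)"
proof -
  have pointwise: "(\<exists>!(e, u). a = e + u \<and> idempotent e \<and> u \<in> units_of_ring)
    \<longleftrightarrow> (\<exists>!e. idempotent e \<and> a - e \<in> units_of_ring)" (is "?pairs \<longleftrightarrow> (\<exists>!e. ?P e)") for a :: 'a
  proof
    assume ?pairs
    then obtain e u where eu: "a = e + u" "idempotent e" "u \<in> units_of_ring"
      and uniq: "\<And>e' u'. a = e' + u' \<Longrightarrow> idempotent e' \<Longrightarrow> u' \<in> units_of_ring \<Longrightarrow> (e', u') = (e, u)"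
      by (auto simp: Ex1_def)
    show "\<exists>!e. ?P e"
    proof (rule ex1I[of _ e])
      show "?P e" using eu by simp
      show "e' = e" if "?P e'" for e' using uniq[of e' "a - e'"] that by simp
    qed
  next
    assume "\<exists>!e. ?P e"
    then obtain e where e: "?P e" and uniq: "\<And>e'. ?P e' \<Longrightarrow> e' = e" by blast
    show ?pairs
    proof (rule ex1I[of _ "(e, a - e)"])
      show "case (e, a - e) of (e, u) \<Rightarrow> a = e + u \<and> idempotent e \<and> u \<in> units_of_ring"
        using e by simp
      show "p = (e, a - e)" if "case p of (e, u) \<Rightarrow> a = e + u \<and> idempotent e \<and> u \<in> units_of_ring"
        for p using that uniq by (cases p) auto
    qed
  qed
  then show ?thesis by (simp only: uniquely_clean_def pointwise)
qed

lemma unit_minus_one_in_jacobson_if_uniquely_clean: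
  fixes v :: "'a::ring_1"
  assumes central: "\<And>e r :: 'a. e * e = e \<Longrightarrow> e * r = r * e"
    and clean: "\<forall>a::'a. \<exists>!e. idempotent e \<and> a - e \<in> units_of_ring"
    and v: "v \<in> units_of_ring"
  shows "v - 1 \<in> jacobson"
  unfolding jacobson_iff
proof
  fix r
  obtain v' where v': "v' * v = 1" using v units_of_ringE by metis
  define y where "y = 1 - r * (v - 1)"
  obtain f where f: "f * f = f" "y - f \<in> units_of_ring" using clean unfolding idempotent_def by blast
  obtain w' where w': "w' * (y - f) = 1" "(y - f) * w' = 1" using f(2) units_of_ringE by blast
  define t where "t = - (w' * f * r)"
  have "f = w' * ((y - f) * f)" using w'(1) by (simp add: mult.assoc[symmetric])
  also have "\<dots> = w' * (f * (y - f))" using central[OF f(1)] by simp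
  also have "\<dots> = t * (v - 1)" unfolding t_def y_def by (simp add: algebra_simps f(1) mult.assoc)
  finally have tv: "t * (v - 1) = f" by simp
  \<comment> \<open>\<open>v - f\<close> is invertible: on the corner \<open>f\<close> it is \<open>v - 1\<close>, on the corner \<open>1 - f\<close> it is \<open>v\<close>.\<close>
  have "(t * f + v' * (1 - f)) * (v - f) = t * (f * (v - f)) + v' * ((1 - f) * (v - f))"
    by (simp add: distrib_right mult.assoc)
  also have "\<dots> = (t * (v - 1)) * f + (v' * v) * (1 - f)"
    using central[OF f(1), of v] f(1) by (simp add: algebra_simps mult.assoc)
  also have "\<dots> = 1" using tv v' f(1) by simp
  finally have "v - f \<in> units_of_ring"
    using dedekind_finite_if_idempotents_central[OF central] units_of_ringI by blast
  moreover have "v - 0 \<in> units_of_ring" using v by simp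
  moreover obtain e where "\<And>g. idempotent g \<Longrightarrow> v - g \<in> units_of_ring \<Longrightarrow> g = e"
    using clean by blast
  ultimately have "f = 0" using f(1) unfolding idempotent_def by (metis mult_zero_left)
  then have "y \<in> units_of_ring" using f(2) by simp
  then obtain y' where "y' * y = 1" by (metis units_of_ringE)
  then show "\<exists>t. t * (1 - r * (v - 1)) = 1" unfolding y_def by blast
qed

lemma commutator_in_jacobson:
  fixes x y :: "'a::ring_1"
  assumes two: "(1 + 1 :: 'a) \<in> jacobson" and clean: "\<forall>a::'a. \<exists>e. e * e = e \<and> a - e \<in> jacobson"
  shows "x * y - y * x \<in> jacobson"
proof -
  have square: "a * a - a \<in> jacobson" for a :: 'a
  proof -
    obtain e where e: "e * e = e" "a - e \<in> jacobson" using clean by blast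
    have "a * a - a = a * (a - e) + (a - e) * e - (a - e)" by (simp add: algebra_simps e(1))
    also have "\<dots> \<in> jacobson"
      by (intro jacobson_diff jacobson_add jacobson_mult_left jacobson_mult_right e(2))
    finally show ?thesis .
  qed
  have "x * y + y * x = ((x + y) * (x + y) - (x + y)) - (x * x - x) - (y * y - y)"
    by (simp add: algebra_simps)
  also have "\<dots> \<in> jacobson" by (intro jacobson_diff square)
  finally have "x * y + y * x \<in> jacobson" .
  moreover have "(y * x) * (1 + 1) \<in> jacobson" using two by (rule jacobson_mult_left)
  ultimately have "(x * y + y * x) - (y * x) * (1 + 1) \<in> jacobson" by (rule jacobson_diff)
  then show ?thesis unfolding distrib_left mult_1_right by simp
qed

lemma two_in_jacobson_if_one_plus_idempotent:
  assumes "(e::'a::ring_1) * e = e" and "1 + e \<in> jacobson"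
  shows "(1 + 1 :: 'a) \<in> jacobson"
proof -
  have "1 - (1 + e) \<in> units_of_ring" using assms(2) by (rule one_minus_jacobson_in_units)
  then have "e = 1" using assms(1) units_of_ring_uminus idempotent_unit_eq_one by fastforce
  then show ?thesis using assms(2) by simp
qed

section \<open>Rings with involution\<close>

definition idempotents_selfadjoint :: "('a::ring_1 \<Rightarrow> 'a) \<Rightarrow> bool" where
  "idempotents_selfadjoint st \<longleftrightarrow> (\<forall>e. idempotent e \<longrightarrow> st e = e)"

locale ring_with_involution =
  fixes st :: "'a::ring_1 \<Rightarrow> 'a"
  assumes star_ring: "star_ring st"
begin

lemma star_add: "st (a + b) = st a + st b"
  using star_ring unfolding star_ring_def by blast

lemma star_mult: "st (a * b) = st b * st a"
  using star_ring unfolding star_ring_def by blast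

lemma star_star [simp]: "st (st a) = a"
  using star_ring unfolding star_ring_def by blast

lemma star_zero [simp]: "st 0 = 0"
  using star_add[of 0 0] by simp

lemma star_uminus: "st (- a) = - st a"
  using star_add[of "- a" a] by (simp add: eq_neg_iff_add_eq_0)

lemma star_diff: "st (a - b) = st a - st b"
  by (metis diff_conv_add_uminus star_add star_uminus)

lemma star_one [simp]: "st 1 = 1"
  by (metis mult_1_left star_mult star_star)

lemma projection_one_minus: "projection st e \<Longrightarrow> projection st (1 - e)"
  unfolding projection_def by (simp add: algebra_simps star_diff)

lemma projection_conjugate:
  assumes e: "projection st e" and u: "u * u' = 1" "u' * u = 1"
    and commute: "e * (st u * u) = (st u * u) * e"
  shows "projection st (u * e * u')"
proof -
  have ee: "e * e = e" and se: "st e = e" using e unfolding projection_def by auto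
  have "(u * e * u') * (u * e * u') = u * (e * (u' * u) * e) * u'" by (simp add: mult.assoc)
  then have idem: "(u * e * u') * (u * e * u') = u * e * u'" using u(2) ee by simp
  have inv: "st u' * st u = 1" using u(1) by (metis star_mult star_one)
  have "st (u * e * u') = st u' * e * st u * (u * u')" by (simp add: star_mult se mult.assoc u(1))
  also have "\<dots> = st u' * (e * (st u * u)) * u'" by (simp add: mult.assoc)
  also have "\<dots> = (st u' * st u) * u * e * u'" by (simp add: commute mult.assoc)
  also have "\<dots> = u * e * u'" by (simp add: inv)
  finally show ?thesis using idem unfolding projection_def by simp
qed

lemma corner_eq_zero_if_idempotents_selfadjoint:
  assumes sa: "idempotents_selfadjoint st" and h: "(h::'a) * h = h"
  shows "h * r * (1 - h) = 0"
proof -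
  have sa': "st g = g" if "g * g = g" for g
    using sa that unfolding idempotents_selfadjoint_def idempotent_def by blast
  define x where "x = h * r * (1 - h)"
  have hx: "h * x = x" unfolding x_def by (simp add: mult.assoc[symmetric] h)
  have xh: "x * h = 0" unfolding x_def by (simp add: algebra_simps h mult.assoc)
  have "x * x = (x * h) * (r * (1 - h))" by (simp add: x_def mult.assoc)
  then have xx: "x * x = 0" using xh by simp
  \<comment> \<open>\<open>h + x\<close> is again idempotent, so \<open>x = st x\<close>; but \<open>x\<close> lies in the corner \<open>h R (1 - h)\<close> and
    \<open>st x\<close> in the opposite corner \<open>(1 - h) R h\<close>.\<close>
  have "(h + x) * (h + x) = h + x" by (simp add: distrib_left distrib_right h hx xh xx)
  then have "h + st x = h + x" using sa' sa'[OF h] by (metis star_add)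
  then have "st x = x" by simp
  moreover have "h * st x = 0"
  proof -
    have "st x = (1 - h) * (st r * h)"
      unfolding x_def using sa'[OF h] by (simp add: star_mult star_diff mult.assoc)
    moreover have "h * (1 - h) = 0" using h by (simp add: right_diff_distrib)
    ultimately show ?thesis by (metis mult.assoc mult_zero_left)
  qed
  ultimately show ?thesis using hx unfolding x_def by simp
qed

lemma idempotent_central_if_idempotents_selfadjoint:
  assumes "idempotents_selfadjoint st" and "(e::'a) * e = e"
  shows "e * r = r * e"
proof (rule idempotent_central_if_corners_zero)
  have "(1 - e) * (1 - e) = 1 - e" using assms(2) by (simp add: algebra_simps)
  then show "(1 - e) * r * e = 0"
    using corner_eq_zero_if_idempotents_selfadjoint[OF assms(1), of "1 - e"] by simp
qed (rule corner_eq_zero_if_idempotents_selfadjoint[OF assms])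

lemma idempotents_selfadjoint_if_strongly_J_star_clean:
  assumes "strongly_J_star_clean st"
  shows "idempotents_selfadjoint st"
  unfolding idempotents_selfadjoint_def idempotent_def
proof (intro allI impI)
  fix g :: 'a assume g: "g * g = g"
  obtain e where e: "projection st e" "g - e \<in> jacobson" "g * e = e * g"
    using assms unfolding strongly_J_star_clean_def by force
  have "g = e"
    using commuting_idempotents_eq_if_diff_in_jacobson[OF g _ e(3,2)] e(1)
    unfolding projection_def by blast
  then show "st g = g" using e(1) unfolding projection_def by simp
qed

lemma unit_minus_one_in_jacobson_if_strongly_J_star_clean:
  fixes v :: 'a
  assumes "strongly_J_star_clean st" and v: "v \<in> units_of_ring"
  shows "v - 1 \<in> jacobson"
proof -
  obtain e u where eu: "v = e + u" "projection st e" "u \<in> jacobson" "v * e = e * v"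
    using assms(1) unfolding strongly_J_star_clean_def by blast
  have e: "e * e = e" using eu(2) unfolding projection_def by simp
  have "u * e = e * u" using eu(1,4) by (simp add: algebra_simps)
  then have "v * v - v = (e + e + u - 1) * u" unfolding eu(1) by (simp add: algebra_simps e)
  then have "v * v - v \<in> jacobson" using eu(3) jacobson_mult_left by simp
  moreover obtain v' where "v' * v = 1" using v units_of_ringE by metis
  then have "v' * (v * v - v) = v - 1" by (simp add: algebra_simps mult.assoc[symmetric])
  ultimately show ?thesis using jacobson_mult_left by metis
qed

lemma uniquely_clean_if_strongly_J_star_clean:
  fixes a :: 'a
  assumes SJ: "strongly_J_star_clean st"
  shows "\<exists>!e. idempotent e \<and> a - e \<in> units_of_ring"
proof -
  obtain e u where eu: "a = e + u" "projection st e" "u \<in> jacobson"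
    using SJ unfolding strongly_J_star_clean_def by blast
  have e: "e * e = e" using eu(2) unfolding projection_def by simp
  have "a - (1 - e) = (e + e - 1) + u" using eu(1) by (simp add: algebra_simps)
  then have "a - (1 - e) \<in> units_of_ring"
    by (simp only:) (rule units_add_jacobson[OF reflection_in_units_of_ring[OF e] eu(3)])
  moreover have "idempotent (1 - e)" using e unfolding idempotent_def by (simp add: algebra_simps)
  moreover have "f = g"
    if "idempotent f" "a - f \<in> units_of_ring" "idempotent g" "a - g \<in> units_of_ring" for f g
  proof (rule commuting_idempotents_eq_if_diff_in_jacobson)
    show "f * f = f" "g * g = g" using that unfolding idempotent_def by simp_all
    then show "f * g = g * f"
      using idempotent_central_if_idempotents_selfadjoint
        idempotents_selfadjoint_if_strongly_J_star_clean[OF SJ] by blast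
    have "(a - g - 1) - (a - f - 1) \<in> jacobson"
      using that unit_minus_one_in_jacobson_if_strongly_J_star_clean[OF SJ] jacobson_diff by blast
    then show "f - g \<in> jacobson" by simp
  qed
  ultimately show ?thesis by blast
qed

lemma strongly_J_star_clean_if_uniquely_clean:
  assumes sa: "idempotents_selfadjoint st"
    and clean: "\<forall>a::'a. \<exists>!e. idempotent e \<and> a - e \<in> units_of_ring"
  shows "strongly_J_star_clean st"
  unfolding strongly_J_star_clean_def
proof
  fix a :: 'a
  have central: "\<And>e r :: 'a. e * e = e \<Longrightarrow> e * r = r * e"
    using idempotent_central_if_idempotents_selfadjoint[OF sa] by blast
  have unit_minus_one: "v - 1 \<in> jacobson" if "v \<in> units_of_ring" for v :: 'a
    using unit_minus_one_in_jacobson_if_uniquely_clean[OF central clean that] .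
  have "(- 1 :: 'a) \<in> units_of_ring" by (rule units_of_ringI[of _ "- 1"]) simp_all
  then have "- 1 - 1 \<in> (jacobson :: 'a set)" by (rule unit_minus_one)
  then have two: "(1 + 1 :: 'a) \<in> jacobson" by simp
  obtain e where e: "e * e = e" "a - e \<in> units_of_ring" using clean unfolding idempotent_def by blast
  \<comment> \<open>\<open>a - e \<equiv> 1\<close> and \<open>2 e \<equiv> 0\<close> modulo the radical, hence \<open>a \<equiv> 1 - e\<close>.\<close>
  have "a - (1 - e) = (a - e - 1) + e * (1 + 1)" unfolding distrib_left by simp
  also have "\<dots> \<in> jacobson"
    by (rule jacobson_add[OF unit_minus_one[OF e(2)] jacobson_mult_left[OF two]])
  finally have "a - (1 - e) \<in> jacobson" .
  moreover have "projection st (1 - e)"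
    using sa e(1) unfolding idempotents_selfadjoint_def idempotent_def projection_def
    by (simp add: algebra_simps star_diff)
  moreover have "a * (1 - e) = (1 - e) * a" using central[OF e(1), of a] by (simp add: algebra_simps)
  ultimately show "\<exists>e u. a = e + u \<and> projection st e \<and> u \<in> jacobson \<and> a * e = e * a"
    by force
qed

lemma strongly_J_star_clean_iff:
  "strongly_J_star_clean st \<longleftrightarrow>
     idempotents_selfadjoint st \<and> (\<forall>a::'a. \<exists>!e. idempotent e \<and> a - e \<in> units_of_ring)"
proof
  assume "strongly_J_star_clean st"
  then show "idempotents_selfadjoint st \<and> (\<forall>a::'a. \<exists>!e. idempotent e \<and> a - e \<in> units_of_ring)"
    by (simp add: idempotents_selfadjoint_if_strongly_J_star_clean
        uniquely_clean_if_strongly_J_star_clean)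
qed (elim conjE, rule strongly_J_star_clean_if_uniquely_clean)

lemma idempotents_selfadjoint_if_strongly_star_clean:
  assumes "strongly_star_clean st"
  shows "idempotents_selfadjoint st"
  unfolding idempotents_selfadjoint_def idempotent_def
proof (intro allI impI)
  fix g :: 'a assume g: "g * g = g"
  obtain p u where pu: "g = p + u" "projection st p" "u \<in> units_of_ring" "p * u = u * p"
    using assms unfolding strongly_star_clean_def by blast
  have p: "p * p = p" "st p = p" using pu(2) unfolding projection_def by auto
  have "g * p = p * g" unfolding pu(1) using pu(4) by (simp add: algebra_simps)
  moreover have "g - p \<in> units_of_ring" using pu(1,3) by simp
  ultimately have "p = 1 - g" using commuting_idempotents_diff_in_units[OF g p(1)] by blast
  then show "st g = g" using p(2) by (simp add: star_diff)
qed

lemma idempotents_selfadjoint_if_clean_star_conditions: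
  assumes "\<forall>a. \<exists>e. idempotent e \<and> a - e \<in> units_of_ring \<and> a * e = e * a
                  \<and> a * st e = st e * a \<and> e - st e \<in> jacobson"
  shows "idempotents_selfadjoint st"
  unfolding idempotents_selfadjoint_def idempotent_def
proof (intro allI impI)
  fix g :: 'a assume g: "g * g = g"
  obtain e where e: "e * e = e" "g - e \<in> units_of_ring" "g * e = e * g" "g * st e = st e * g"
      "e - st e \<in> jacobson"
    using assms unfolding idempotent_def by blast
  have "e = 1 - g" using commuting_idempotents_diff_in_units[OF g e(1,3,2)] .
  then have se: "st e = 1 - st g" by (simp add: star_diff)
  have "g * st g = st g * g" using e(4) unfolding se by (simp add: algebra_simps)
  moreover have "e - st e = - (g - st g)" using \<open>e = 1 - g\<close> by (simp add: star_diff)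
  then have "g - st g \<in> jacobson" using e(5) by (metis jacobson_uminus_iff)
  moreover have "st g * st g = st g" using g by (metis star_mult)
  ultimately show "st g = g"
    using commuting_idempotents_eq_if_diff_in_jacobson[OF g] by metis
qed

lemma commuting_projection_iff_idempotent:
  assumes "idempotents_selfadjoint st"
  shows "projection st e \<and> a - e \<in> units_of_ring \<and> a * e = e * a
    \<longleftrightarrow> idempotent e \<and> a - e \<in> units_of_ring"
  using assms idempotent_central_if_idempotents_selfadjoint
  unfolding idempotents_selfadjoint_def idempotent_def projection_def by metis

lemma clean_star_conditions_iff_idempotent:
  assumes "idempotents_selfadjoint st"
  shows "idempotent e \<and> a - e \<in> units_of_ring \<and> a * e = e * a \<and> a * st e = st e * a
      \<and> e - st e \<in> jacobson
    \<longleftrightarrow> idempotent e \<and> a - e \<in> units_of_ring"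
  using assms idempotent_central_if_idempotents_selfadjoint zero_in_jacobson
  unfolding idempotents_selfadjoint_def idempotent_def by (metis diff_self)

lemma strongly_J_star_clean_iff_uniquely_clean_strongly_star_clean:
  "strongly_J_star_clean st \<longleftrightarrow> uniquely_clean TYPE('a) \<and> strongly_star_clean st"
proof
  assume "strongly_J_star_clean st"
  then have sa: "idempotents_selfadjoint st"
    and clean: "\<forall>a::'a. \<exists>!e. idempotent e \<and> a - e \<in> units_of_ring"
    using strongly_J_star_clean_iff by auto
  have "strongly_star_clean st"
    unfolding strongly_star_clean_def
  proof
    fix a :: 'a
    obtain e where "idempotent e" "a - e \<in> units_of_ring" using clean by blast
    then have "projection st e" "a - e \<in> units_of_ring" "a * e = e * a"
      using commuting_projection_iff_idempotent[OF sa, of e a] by blast+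
    moreover have "e * (a - e) = (a - e) * e" using \<open>a * e = e * a\<close> by (simp add: algebra_simps)
    ultimately show "\<exists>e u. a = e + u \<and> projection st e \<and> u \<in> units_of_ring \<and> e * u = u * e" by force
  qed
  then show "uniquely_clean TYPE('a) \<and> strongly_star_clean st"
    using clean uniquely_clean_iff by blast
next
  assume "uniquely_clean TYPE('a) \<and> strongly_star_clean st"
  then show "strongly_J_star_clean st"
    using strongly_J_star_clean_iff uniquely_clean_iff idempotents_selfadjoint_if_strongly_star_clean
    by blast
qed

lemma strongly_J_star_clean_iff_uniquely_strongly_star_clean:
  "strongly_J_star_clean st \<longleftrightarrow> uniquely_strongly_star_clean st"
  unfolding strongly_J_star_clean_iff
proof
  assume USC: "uniquely_strongly_star_clean st"
  have "strongly_star_clean st"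
    unfolding strongly_star_clean_def
  proof
    fix a :: 'a
    obtain e where "projection st e" "a - e \<in> units_of_ring" "a * e = e * a"
      using USC unfolding uniquely_strongly_star_clean_def by blast
    moreover have "e * (a - e) = (a - e) * e" using \<open>a * e = e * a\<close> by (simp add: algebra_simps)
    ultimately show "\<exists>e u. a = e + u \<and> projection st e \<and> u \<in> units_of_ring \<and> e * u = u * e"
      by force
  qed
  then have sa: "idempotents_selfadjoint st" by (rule idempotents_selfadjoint_if_strongly_star_clean)
  with USC show "idempotents_selfadjoint st \<and> (\<forall>a::'a. \<exists>!e. idempotent e \<and> a - e \<in> units_of_ring)"
    unfolding uniquely_strongly_star_clean_def by (simp add: commuting_projection_iff_idempotent)
next
  assume "idempotents_selfadjoint st \<and> (\<forall>a::'a. \<exists>!e. idempotent e \<and> a - e \<in> units_of_ring)"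
  then show "uniquely_strongly_star_clean st"
    unfolding uniquely_strongly_star_clean_def by (simp add: commuting_projection_iff_idempotent)
qed

lemma strongly_J_star_clean_iff_clean_star_conditions:
  "strongly_J_star_clean st \<longleftrightarrow>
    (\<forall>a. \<exists>!e. idempotent e \<and> a - e \<in> units_of_ring \<and> a * e = e * a
               \<and> a * st e = st e * a \<and> e - st e \<in> jacobson)"
  unfolding strongly_J_star_clean_iff
proof
  assume "idempotents_selfadjoint st \<and> (\<forall>a::'a. \<exists>!e. idempotent e \<and> a - e \<in> units_of_ring)"
  then show "\<forall>a. \<exists>!e. idempotent e \<and> a - e \<in> units_of_ring \<and> a * e = e * a
               \<and> a * st e = st e * a \<and> e - st e \<in> jacobson"
    by (simp add: clean_star_conditions_iff_idempotent)
next
  assume conditions: "\<forall>a. \<exists>!e. idempotent e \<and> a - e \<in> units_of_ring \<and> a * e = e * a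
               \<and> a * st e = st e * a \<and> e - st e \<in> jacobson"
  then have "idempotents_selfadjoint st"
    by (intro idempotents_selfadjoint_if_clean_star_conditions) blast
  with conditions show "idempotents_selfadjoint st \<and> (\<forall>a::'a. \<exists>!e. idempotent e \<and> a - e \<in> units_of_ring)"
    by (simp add: clean_star_conditions_iff_idempotent)
qed

lemma commutator_in_jacobson_if_uniquely_J_star_clean:
  fixes x y :: 'a
  assumes "uniquely_J_star_clean st"
  shows "x * y - y * x \<in> jacobson"
proof (rule commutator_in_jacobson)
  have clean: "\<exists>e. projection st e \<and> a - e \<in> jacobson" for a :: 'a
    using assms unfolding uniquely_J_star_clean_def by blast
  then show "\<forall>a::'a. \<exists>e. e * e = e \<and> a - e \<in> jacobson" unfolding projection_def by blast
  obtain p where "projection st p" "- 1 - p \<in> (jacobson :: 'a set)" using clean by blast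
  moreover have "- (- 1 - p) = 1 + p" by (simp add: algebra_simps)
  ultimately have "p * p = p" "1 + p \<in> jacobson" unfolding projection_def by (metis jacobson_uminus_iff)+
  then show "(1 + 1 :: 'a) \<in> jacobson" by (rule two_in_jacobson_if_one_plus_idempotent)
qed

lemma corner_eq_zero_if_isolated_projection:
  fixes r :: 'a
  assumes e: "projection st e"
    and isolated: "\<And>q. projection st q \<Longrightarrow> e - q \<in> jacobson \<Longrightarrow> q = e"
    and sJ: "e * r * (1 - e) \<in> jacobson" and tJ: "(1 - e) * st r * e \<in> jacobson"
  shows "e * r * (1 - e) = 0"
proof -
  have ee: "e * e = e" and se: "st e = e" using e unfolding projection_def by auto
  define s where "s = e * r * (1 - e)"
  define t where "t = (1 - e) * st r * e"
  have st_s: "st s = t" unfolding s_def t_def by (simp add: star_mult star_diff se mult.assoc)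
  have e_compl: "e * (1 - e) = 0" "(1 - e) * e = 0" using ee by (simp_all add: algebra_simps)
  have es: "e * s = s" unfolding s_def by (simp add: mult.assoc[symmetric] ee)
  have se0: "s * e = 0" unfolding s_def by (simp add: mult.assoc e_compl)
  have et: "e * t = 0" unfolding t_def by (simp add: mult.assoc[symmetric] e_compl)
  have te: "t * e = t" unfolding t_def by (simp add: mult.assoc ee)
  have ss: "s * s = 0" by (metis es se0 mult.assoc mult_zero_left)
  have tt: "t * t = 0" by (metis te et mult.assoc mult_zero_right)
  \<comment> \<open>Conjugating \<open>e\<close> by \<open>u = 1 + s - s\<^sup>*\<close> gives a projection \<open>q\<close> with \<open>e - q \<in> J\<close>, so \<open>q = e\<close>.\<close>
  define u where "u = 1 + (s - t)"
  have "u = 1 - (t - s)" unfolding u_def by simp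
  then have "u \<in> units_of_ring"
    using jacobson_diff[OF tJ sJ] one_minus_jacobson_in_units unfolding s_def t_def by simp
  then obtain u' where u': "u * u' = 1" "u' * u = 1" by (rule units_of_ringE)
  have "st t = s" using st_s by (metis star_star)
  then have "st u = 1 + (t - s)" unfolding u_def by (simp add: star_add star_diff st_s)
  then have "st u * u = (1 + (t - s)) * u" by simp
  also have "\<dots> = 1 + t * s + s * t" unfolding u_def by (simp add: algebra_simps ss tt)
  finally have "e * (st u * u) = (st u * u) * e"
    by (simp add: algebra_simps mult.assoc[symmetric] es se0 et te)
  then have q: "projection st (u * e * u')" using projection_conjugate[OF e u'] by blast
  have ue: "e * u - u * e = s + t" unfolding u_def by (simp add: algebra_simps es se0 et te)
  have "e - u * e * u' = (e * u - u * e) * u'" using u'(1) by (simp add: left_diff_distrib mult.assoc)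
  then have "e - u * e * u' = (s + t) * u'" by (simp only: ue)
  then have "e - u * e * u' \<in> jacobson"
    using jacobson_add[OF sJ tJ] jacobson_mult_right unfolding s_def t_def by simp
  then have "u * e * u' = e" using isolated q by blast
  then have "u * e = e * u" by (metis u'(2) mult.assoc mult_1_right)
  then have "e * (s + t) = 0" using ue by simp
  then show ?thesis using es et unfolding s_def by (simp add: distrib_left)
qed

lemma corner_eq_zero_if_uniquely_J_star_clean:
  fixes r :: 'a
  assumes UJ: "uniquely_J_star_clean st" and e: "projection st e"
  shows "e * r * (1 - e) = 0"
proof (rule corner_eq_zero_if_isolated_projection[OF e])
  have ee: "e * e = e" using e unfolding projection_def by simp
  have "e - e \<in> jacobson" using zero_in_jacobson by simp
  then show "q = e" if "projection st q" "e - q \<in> jacobson" for q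
    using UJ e that unfolding uniquely_J_star_clean_def by blast
  have "e * r * (1 - e) = e * (r * (1 - e)) - (r * (1 - e)) * e"
    by (simp add: algebra_simps ee mult.assoc)
  then show "e * r * (1 - e) \<in> jacobson"
    using commutator_in_jacobson_if_uniquely_J_star_clean[OF UJ] by simp
  have "(1 - e) * st r * e = (1 - e) * (st r * e) - (st r * e) * (1 - e)"
    by (simp add: algebra_simps ee mult.assoc)
  then show "(1 - e) * st r * e \<in> jacobson"
    using commutator_in_jacobson_if_uniquely_J_star_clean[OF UJ] by simp
qed

lemma uniquely_J_star_clean_if_strongly_J_star_clean:
  assumes SJ: "strongly_J_star_clean st"
  shows "uniquely_J_star_clean st"
  unfolding uniquely_J_star_clean_def
proof
  fix a :: 'a
  have "e = g" if "projection st e" "a - e \<in> jacobson" "projection st g" "a - g \<in> jacobson" for e g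
  proof (rule commuting_idempotents_eq_if_diff_in_jacobson)
    show "e * e = e" "g * g = g" using that unfolding projection_def by simp_all
    show "e * g = g * e"
      using \<open>e * e = e\<close> idempotent_central_if_idempotents_selfadjoint
        idempotents_selfadjoint_if_strongly_J_star_clean[OF SJ] by blast
    show "e - g \<in> jacobson" using jacobson_diff[OF that(4) that(2)] by simp
  qed
  moreover obtain e u where "a = e + u" "projection st e" "u \<in> jacobson"
    using SJ unfolding strongly_J_star_clean_def by blast
  then have "\<exists>e. projection st e \<and> a - e \<in> jacobson" by force
  ultimately show "\<exists>!e. projection st e \<and> a - e \<in> jacobson" by blast
qed

lemma strongly_J_star_clean_if_uniquely_J_star_clean:
  assumes UJ: "uniquely_J_star_clean st"
  shows "strongly_J_star_clean st"
  unfolding strongly_J_star_clean_def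
proof
  fix a :: 'a
  obtain e where e: "projection st e" "a - e \<in> jacobson"
    using UJ unfolding uniquely_J_star_clean_def by blast
  have "e * a = a * e"
  proof (rule idempotent_central_if_corners_zero)
    show "e * a * (1 - e) = 0" by (rule corner_eq_zero_if_uniquely_J_star_clean[OF UJ e(1)])
    show "(1 - e) * a * e = 0"
      using corner_eq_zero_if_uniquely_J_star_clean[OF UJ projection_one_minus[OF e(1)]] by simp
  qed
  then show "\<exists>e u. a = e + u \<and> projection st e \<and> u \<in> jacobson \<and> a * e = e * a"
    using e by force
qed

end

theorem theorem3p2:
  fixes st :: "'a::ring_1 \<Rightarrow> 'a"
  assumes "star_ring st"
  shows "(strongly_J_star_clean st \<longleftrightarrow> uniquely_clean TYPE('a) \<and> strongly_star_clean st)
       \<and> (strongly_J_star_clean st \<longleftrightarrow> uniquely_strongly_star_clean st)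
       \<and> (strongly_J_star_clean st \<longleftrightarrow> uniquely_J_star_clean st)
       \<and> (strongly_J_star_clean st \<longleftrightarrow>
            (\<forall>a. \<exists>!e. idempotent e \<and> a - e \<in> units_of_ring \<and> a * e = e * a
                      \<and> a * st e = st e * a \<and> e - st e \<in> jacobson))"
proof -
  interpret ring_with_involution st by unfold_locales (rule assms)
  show ?thesis
    using strongly_J_star_clean_iff_uniquely_clean_strongly_star_clean
      strongly_J_star_clean_iff_uniquely_strongly_star_clean
      uniquely_J_star_clean_if_strongly_J_star_clean strongly_J_star_clean_if_uniquely_J_star_clean
      strongly_J_star_clean_iff_clean_star_conditions
    by blast
qed

end
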